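(* Let $q$ be an odd prime power, $a\in\mathbb{F}_q^*$ a non-square, $\beta\in\mathbb{F}_{q^2}$ with $\beta^2=a$, and for $c\in\mathbb{F}_q^*$ let $f_c(X)=X(X^{q-1}-c)^{q+1}$ as a map $\mathbb{F}_{q^2}\to\mathbb{F}_{q^2}$. Then the map $\varphi:\mathbb{F}_{q^2}\to\mathbb{F}_{q^2}$, $\varphi(x+y\beta)=y+x\beta^{-1}$ ($x,y\in\mathbb{F}_q$), is a bijection satisfying $\varphi\circ f_c=f_{-c}\circ\varphi$; consequently the functional graphs $\mathcal{G}(f_c)$ and $\mathcal{G}(f_{-c})$ are isomorphic.
   Context: The functional graph $\mathcal{G}(f)$ of $f:\mathbb{F}_{q^2}\to\mathbb{F}_{q^2}$ is the directed graph with vertex set $\mathbb{F}_{q^2}$ and edges $\langle x,f(x)\rangle$. *)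

theory Defs
  imports "HOL-Computational_Algebra.Primes"
begin

text \<open>The subfield F_q of a field K with q^2 elements: the fixed points of x |-> x^q.\<close>
definition subF :: "nat \<Rightarrow> 'a::field set" where
  "subF q = {x. x ^ q = x}"

definition fc :: "nat \<Rightarrow> 'a::field \<Rightarrow> 'a \<Rightarrow> 'a" where
  "fc q c X = X * (X ^ (q - 1) - c) ^ (q + 1)"

definition phi :: "nat \<Rightarrow> 'a::field \<Rightarrow> 'a \<Rightarrow> 'a" where
  "phi q \<beta> z = (THE w. \<exists>x\<in>subF q. \<exists>y\<in>subF q. z = x + y * \<beta> \<and> w = y + x * inverse \<beta>)"

text \<open>Isomorphism of functional graphs G(f), G(g): a bijection of vertex sets
  mapping edges <x, f x> exactly onto edges <u, g u>.\<close>
definition fg_iso :: "('a \<Rightarrow> 'a) \<Rightarrow> ('a \<Rightarrow> 'a) \<Rightarrow> bool" where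
  "fg_iso f g \<longleftrightarrow> (\<exists>h. bij h \<and> (\<forall>x y. y = f x \<longleftrightarrow> h y = g (h x)))"

end

theory Submission
  imports Defs "HOL-Number_Theory.Residues"
begin

text \<open>In a field with \<open>q\<^sup>2\<close> elements, \<open>z \<mapsto> z\<^sup>q\<close> is an additive involution with fixed
  field \<open>F\<^sub>q\<close>. As \<open>\<beta>\<^sup>2 \<in> F\<^sub>q\<close> but \<open>\<beta> \<notin> F\<^sub>q\<close>, it sends \<open>\<beta>\<close> to \<open>-\<beta>\<close>, so every \<open>z\<close> is
  \<open>(z + z\<^sup>q)/2 + (z - z\<^sup>q)/(2\<beta>) \<cdot> \<beta>\<close> with both coefficients in \<open>F\<^sub>q\<close>, and \<open>\<phi>\<close> is just
  \<open>z \<mapsto> z/\<beta>\<close>. Since \<open>\<beta>\<^bsup>q-1\<^esup> = -1\<close>, dividing by \<open>\<beta>\<close> turns \<open>X\<^bsup>q-1\<^esup> - c\<close> into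
  \<open>-(X\<^bsup>q-1\<^esup> + c)\<close>, and the sign disappears in the even power \<open>q + 1\<close>.\<close>

lemma nonzero_power_card_minus_one:
  fixes x :: "'a::{finite,field}"
  assumes "x \<noteq> 0"
  shows "x ^ (card (UNIV :: 'a set) - 1) = 1"
proof -
  let ?U = "UNIV - {0 :: 'a}"
  have "bij_betw ((*) x) ?U ?U"
    using assms by (intro bij_betw_byWitness[where f' = "\<lambda>y. y / x"]) auto
  then have "(\<Prod>y\<in>?U. x * y) = \<Prod> ?U"
    using prod.reindex_bij_betw[of "(*) x" ?U ?U "\<lambda>y. y"] by simp
  moreover have "(\<Prod>y\<in>?U. x * y) = x ^ card ?U * \<Prod> ?U"
    by (simp add: prod.distrib)
  moreover have "\<Prod> ?U \<noteq> 0"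
    by simp
  ultimately show ?thesis
    by (simp add: card_Diff_singleton)
qed

lemma power_card_eq_self:
  fixes x :: "'a::{finite,field}"
  shows "x ^ card (UNIV :: 'a set) = x"
proof (cases "x = 0")
  case True
  then show ?thesis
    using finite_UNIV_card_ge_0[where 'a = 'a] by simp
next
  case False
  have "card (UNIV :: 'a set) = Suc (card (UNIV :: 'a set) - 1)"
    using finite_UNIV_card_ge_0[where 'a = 'a] by simp
  then have "x ^ card (UNIV :: 'a set) = x * x ^ (card (UNIV :: 'a set) - 1)"
    by (metis power_Suc)
  then show ?thesis
    using nonzero_power_card_minus_one[OF False] by simp
qed

lemma CHAR_eq_of_card_prime_power:
  assumes "prime p" and "card (UNIV :: 'a::{finite,field} set) = p ^ k"
  shows "CHAR('a) = p"
proof -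
  have "prime CHAR('a)"
    by (simp add: finite_imp_CHAR_pos prime_CHAR_semidom)
  moreover have "CHAR('a) dvd p ^ k"
    using CHAR_dvd_CARD[where 'a = 'a] assms(2) by simp
  ultimately show ?thesis
    using assms(1) by (metis prime_dvd_power primes_dvd_imp_eq)
qed

lemma two_neq_zero_if_odd_CHAR:
  assumes "odd CHAR('a::field)"
  shows "(2::'a) \<noteq> 0"
proof
  assume "(2::'a) = 0"
  then have "CHAR('a) dvd 2"
    by (metis of_nat_eq_0_iff_char_dvd of_nat_numeral)
  then show False
    using assms by (metis CHAR_not_1' antisym_conv3 even_zero less_2_cases_iff nat_dvd_not_less)
qed

lemma frobenius_eq_neg_if_square_fixed:
  fixes \<beta> :: "'a::field"
  assumes "(\<beta> ^ 2) ^ q = \<beta> ^ 2" and "\<beta> ^ q \<noteq> \<beta>"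
  shows "\<beta> ^ q = - \<beta>"
proof -
  have "(\<beta> ^ q - \<beta>) * (\<beta> ^ q + \<beta>) = 0"
    using assms(1) by (simp add: algebra_simps power2_eq_square power_mult_distrib)
  then show ?thesis
    using assms(2) by (simp add: eq_neg_iff_add_eq_0)
qed

lemma subF_decomposition:
  fixes \<beta> z :: "'a::field"
  assumes frob_add: "\<And>x y :: 'a. (x + y) ^ q = x ^ q + y ^ q"
    and frob_invol: "\<And>x :: 'a. (x ^ q) ^ q = x"
    and "odd q" and two: "(2::'a) \<noteq> 0"
    and \<beta>: "\<beta> ^ q = - \<beta>" "\<beta> \<noteq> 0"
  shows "\<exists>x\<in>subF q. \<exists>y\<in>subF q. z = x + y * \<beta>"
proof -
  have two_q: "(2::'a) ^ q = 2"
    using frob_add[of 1 1] unfolding one_add_one by simp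
  have conj_diff: "(z - z ^ q) ^ q = - (z - z ^ q)"
    using frob_add[of z "- (z ^ q)"] \<open>odd q\<close> by (simp add: frob_invol)
  have "(z + z ^ q) / 2 \<in> subF q"
    by (simp add: subF_def power_divide frob_add frob_invol two_q add.commute)
  moreover have "(z - z ^ q) / (2 * \<beta>) \<in> subF q"
    by (simp add: subF_def power_divide power_mult_distrib conj_diff two_q \<beta>(1) minus_divide_left)
  moreover have "(z + z ^ q) / 2 + (z - z ^ q) / (2 * \<beta>) * \<beta> = (z + z ^ q) / 2 + (z - z ^ q) / 2"
    using \<beta>(2) by simp
  moreover have "\<dots> = z"
    using two by (simp add: add_divide_distrib[symmetric] flip: mult_2)
  ultimately show ?thesis
    by metis
qed

lemma phi_eq_divide:
  assumes "\<beta> \<noteq> 0" and "\<exists>x\<in>subF q. \<exists>y\<in>subF q. z = x + y * \<beta>"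
  shows "phi q \<beta> z = z / \<beta>"
  unfolding phi_def
proof (rule the_equality)
  show "\<exists>x\<in>subF q. \<exists>y\<in>subF q. z = x + y * \<beta> \<and> z / \<beta> = y + x * inverse \<beta>"
    using assms by (auto simp: field_simps)
  show "w = z / \<beta>" if "\<exists>x\<in>subF q. \<exists>y\<in>subF q. z = x + y * \<beta> \<and> w = y + x * inverse \<beta>" for w
    using that assms(1) by (auto simp: field_simps)
qed

lemma fc_divide:
  fixes \<beta> :: "'a::field"
  assumes "\<beta> ^ q = - \<beta>" and "\<beta> \<noteq> 0" and "odd q"
  shows "fc q c z / \<beta> = fc q (- c) (z / \<beta>)"
proof -
  have "\<beta> ^ (q - 1) * \<beta> = - \<beta>"
    using assms(1,3) by (metis odd_pos power_minus_mult)
  then have "\<beta> ^ (q - 1) = -1"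
    using assms(2) by (metis minus_mult_left mult_cancel_right mult_1)
  then have "(z / \<beta>) ^ (q - 1) + c = - (z ^ (q - 1) - c)"
    by (simp add: power_divide)
  then have "((z / \<beta>) ^ (q - 1) + c) ^ (q + 1) = (z ^ (q - 1) - c) ^ (q + 1)"
    using \<open>odd q\<close> by (metis even_plus_one_iff power_minus_even)
  then show ?thesis
    by (simp add: fc_def)
qed

lemma fg_iso_if_conjugate:
  assumes "bij h" and "h \<circ> f = g \<circ> h"
  shows "fg_iso f g"
  unfolding fg_iso_def
proof (intro exI conjI allI)
  show "bij h" by fact
  show "y = f x \<longleftrightarrow> h y = g (h x)" for x y
    using assms bij_is_inj[OF assms(1)] by (metis comp_apply inj_eq)
qed

theorem mainTheorem4:
  fixes q :: nat and a \<beta> c :: "'a::{finite,field}"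
  assumes "\<exists>p k. prime p \<and> k > 0 \<and> q = p ^ k"
    and "odd q"
    and "card (UNIV :: 'a set) = q ^ 2"
    and "a \<in> subF q" and "a \<noteq> 0"
    and "\<not> (\<exists>b\<in>subF q. b ^ 2 = a)"
    and "\<beta> ^ 2 = a"
    and "c \<in> subF q" and "c \<noteq> 0"
  shows "(\<forall>x\<in>subF q. \<forall>y\<in>subF q. phi q \<beta> (x + y * \<beta>) = y + x * inverse \<beta>)
    \<and> bij (phi q \<beta>)
    \<and> phi q \<beta> \<circ> fc q c = fc q (- c) \<circ> phi q \<beta>
    \<and> fg_iso (fc q c) (fc q (- c))"
proof -
  obtain p k where pk: "prime p" "k > 0" "q = p ^ k"
    using assms(1) by blast
  have "card (UNIV :: 'a set) = p ^ (k * 2)"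
    using assms(3) pk(3) by (simp add: power_mult)
  with pk(1) have "CHAR('a) = p"
    by (rule CHAR_eq_of_card_prime_power)
  then have frob_add: "(x + y) ^ q = x ^ q + y ^ q" for x y :: 'a
    using pk by (simp add: freshmans_dream')
  have two: "(2::'a) \<noteq> 0"
    using \<open>CHAR('a) = p\<close> pk assms(2) by (intro two_neq_zero_if_odd_CHAR) simp
  have frob_invol: "(x ^ q) ^ q = x" for x :: 'a
    using power_card_eq_self[of x] assms(3) by (simp add: power_mult power2_eq_square)
  have \<beta>0: "\<beta> \<noteq> 0"
    using assms(5,7) by auto
  have \<beta>_conj: "\<beta> ^ q = - \<beta>"
    using assms(4,6,7) by (intro frobenius_eq_neg_if_square_fixed) (auto simp: subF_def)
  have phi: "phi q \<beta> = (\<lambda>z. z / \<beta>)"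
    using subF_decomposition[OF frob_add frob_invol assms(2) two \<beta>_conj \<beta>0]
    by (intro ext phi_eq_divide[OF \<beta>0])
  have bij_phi: "bij (phi q \<beta>)"
    unfolding phi using \<beta>0 by (intro o_bij[where g = "\<lambda>z. z * \<beta>"]) auto
  have conj: "phi q \<beta> \<circ> fc q c = fc q (- c) \<circ> phi q \<beta>"
    unfolding phi using fc_divide[OF \<beta>_conj \<beta>0 assms(2)] by auto
  have "\<forall>x\<in>subF q. \<forall>y\<in>subF q. phi q \<beta> (x + y * \<beta>) = y + x * inverse \<beta>"
    using \<beta>0 by (simp add: phi field_simps)
  then show ?thesis
    using bij_phi conj fg_iso_if_conjugate by blast
qed

end
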